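(* Let $R$ be an associative ring with identity and involution $*$, and let $a\in R^{\#}\cap R^{\dagger}$. Then the following are equivalent: (1) $a\in R^{SEP}$; (2) $a(a^{\#})^*a^{\dagger}$ is a right $a^{\dagger}a^2$-idempotent; (3) $a^{\dagger}a^2$ is a left $a(a^{\#})^*a^{\dagger}$-idempotent; (4) $a^{\dagger}a^2$ is a right $a(a^{\#})^*a^{\dagger}$-idempotent.
   Context: An involution on $R$ is a map $x\mapsto x^*$ with $(x^* )^*=x$, $(x+y)^*=x^*+y^*$, $(xy)^*=y^*x^*$. An element $a$ is Moore–Penrose invertible if there is $b$ with $aba=a$, $bab=b$, $(ab)^*=ab$, $(ba)^*=ba$; such $b$ is unique, denoted $a^{\dagger}$, and $R^{\dagger}$ is the set of such $a$. An element $a$ is group invertible if there is $b$ with $aba=a$, $bab=b$, $ab=ba$; such $b$ is unique, denoted $a^{\#}$, and $R^{\#}$ is the set of such $a$. For $a\in R^{\#}\cap R^{\dagger}$, $a$ is SEP if $a^*=a^{\dagger}=a^{\#}$; $R^{SEP}$ denotes the set of SEP elements. For $e,c\in R$, $e$ is a left $c$-idempotent if $e^2=ce$, and a right $c$-idempotent if $e^2=ec$. *)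

theory Defs
  imports Main
begin

definition involution :: "('a::ring_1 \<Rightarrow> 'a) \<Rightarrow> bool" where
  "involution st \<longleftrightarrow> (\<forall>x. st (st x) = x) \<and> (\<forall>x y. st (x + y) = st x + st y)
      \<and> (\<forall>x y. st (x * y) = st y * st x)"

definition is_mp_inverse :: "('a::ring_1 \<Rightarrow> 'a) \<Rightarrow> 'a \<Rightarrow> 'a \<Rightarrow> bool" where
  "is_mp_inverse st a b \<longleftrightarrow> a * b * a = a \<and> b * a * b = b \<and> st (a * b) = a * b \<and> st (b * a) = b * a"

definition mp_invertible :: "('a::ring_1 \<Rightarrow> 'a) \<Rightarrow> 'a \<Rightarrow> bool" where
  "mp_invertible st a \<longleftrightarrow> (\<exists>b. is_mp_inverse st a b)"

definition mp_inv :: "('a::ring_1 \<Rightarrow> 'a) \<Rightarrow> 'a \<Rightarrow> 'a" where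
  "mp_inv st a = (THE b. is_mp_inverse st a b)"

definition is_group_inverse :: "'a::ring_1 \<Rightarrow> 'a \<Rightarrow> bool" where
  "is_group_inverse a b \<longleftrightarrow> a * b * a = a \<and> b * a * b = b \<and> a * b = b * a"

definition group_invertible :: "'a::ring_1 \<Rightarrow> bool" where
  "group_invertible a \<longleftrightarrow> (\<exists>b. is_group_inverse a b)"

definition group_inv :: "'a::ring_1 \<Rightarrow> 'a" where
  "group_inv a = (THE b. is_group_inverse a b)"

definition SEP :: "('a::ring_1 \<Rightarrow> 'a) \<Rightarrow> 'a \<Rightarrow> bool" where
  "SEP st a \<longleftrightarrow> group_invertible a \<and> mp_invertible st a
      \<and> st a = mp_inv st a \<and> mp_inv st a = group_inv a"

definition left_c_idempotent :: "'a::ring_1 \<Rightarrow> 'a \<Rightarrow> bool" where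
  "left_c_idempotent c e \<longleftrightarrow> e * e = c * e"

definition right_c_idempotent :: "'a::ring_1 \<Rightarrow> 'a \<Rightarrow> bool" where
  "right_c_idempotent c e \<longleftrightarrow> e * e = e * c"

end

theory Submission
  imports Defs
begin

text \<open>Write \<open>x = a(a\<^sup>#)\<^sup>*a\<^sup>\<dagger>\<close> and \<open>y = a\<^sup>\<dagger>a\<^sup>2\<close>. If \<open>a\<close> is SEP then \<open>x = y = a\<close>, so all three
  identities hold trivially. Conversely, multiplying each identity by suitable factors built
  from \<open>a\<close>, \<open>a\<^sup>\<dagger>\<close>, \<open>a\<^sup>#\<close> and \<open>a\<^sup>*\<close> yields \<open>aa\<^sup>\<dagger>a\<^sup>\<dagger>a = a\<^sup>\<dagger>a\<close> or \<open>a\<^sup>\<dagger>aa\<^sup># = a\<^sup>\<dagger>\<close>; either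
  one places \<open>a\<^sup>\<dagger>\<close> in \<open>aR\<close> or \<open>Ra\<close>, where the idempotent \<open>aa\<^sup>#\<close> acts as the identity, and
  this forces \<open>a\<^sup>\<dagger> = a\<^sup>#\<close>. For such an EP element the identities reduce to \<open>x = a\<close>, i.e.
  \<open>(a\<^sup>#)\<^sup>* = a\<close>, which is \<open>a\<^sup>* = a\<^sup>#\<close>. Only associativity and the anti-multiplicativity of
  the involution enter, so the argument works in any monoid with an anti-involution.\<close>

locale mp_group_inverses =
  fixes s :: "'a::monoid_mult \<Rightarrow> 'a" and a b g :: 'a
  assumes s_s [simp]: "s (s x) = x"
    and s_mult: "s (x * y) = s y * s x"
    and mp_aba: "a * b * a = a" and mp_bab: "b * a * b = b"
    and mp_ab_sym: "s (a * b) = a * b" and mp_ba_sym: "s (b * a) = b * a"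
    and grp_aga: "a * g * a = a" and grp_gag: "g * a * g = g" and grp_comm: "a * g = g * a"
begin

lemma dual_inverses: "mp_group_inverses s (s a) (s b) (s g)"
proof
  show "s a * s b * s a = s a" "s b * s a * s b = s b"
    using arg_cong[OF mp_aba, of s] arg_cong[OF mp_bab, of s]
    by (simp_all add: s_mult mult.assoc)
  show "s (s a * s b) = s a * s b" "s (s b * s a) = s b * s a"
    using mp_ab_sym mp_ba_sym by (simp_all add: s_mult)
  show "s a * s g * s a = s a" "s g * s a * s g = s g"
    using arg_cong[OF grp_aga, of s] arg_cong[OF grp_gag, of s]
    by (simp_all add: s_mult mult.assoc)
  show "s a * s g = s g * s a"
    using arg_cong[OF grp_comm, of s] by (simp add: s_mult)
qed (simp_all add: s_mult)

lemma grp_gaa: "g * a * a = a"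
  by (metis grp_aga grp_comm)

lemma grp_aag: "a * a * g = a"
  by (metis grp_aga grp_comm mult.assoc)

lemma grp_gga: "g * g * a = g"
  by (metis grp_gag grp_comm mult.assoc)

text \<open>Right-associated forms, with an arbitrary right tail \<open>x\<close>: after normalising a word
  with \<open>mult.assoc\<close>, these rules perform the cancellations.\<close>

lemma absorb:
  "a * (b * a) = a" "a * (b * (a * x)) = a * x"
  "b * (a * b) = b" "b * (a * (b * x)) = b * x"
  "a * (g * (a * x)) = a * x"
  "a * (a * g) = a" "a * (a * (g * x)) = a * x"
  "g * (a * a) = a" "g * (a * (a * x)) = a * x"
  "g * (g * a) = g"
  by (simp_all add: mp_aba mp_bab grp_aga grp_aag grp_gaa grp_gga flip: mult.assoc)

lemma s_mp_ab: "s b * s a = a * b"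
  using mp_ab_sym by (simp add: s_mult)

lemma s_mp_ba: "s a * s b = b * a"
  using mp_ba_sym by (simp add: s_mult)

lemma mp_ba_sa: "b * (a * s a) = s a"
proof -
  have "s a = s (a * (b * a))"
    by (simp add: absorb)
  then show ?thesis
    by (simp add: s_mult s_mp_ba mult.assoc)
qed

lemma mp_sa_ab: "s a * (a * b) = s a"
proof -
  have "s a = s (a * b * a)"
    by (simp add: mp_aba)
  then show ?thesis
    by (simp add: s_mult s_mp_ab)
qed

lemma mp_ba_sg: "b * (a * s g) = s g" "b * (a * (s g * x)) = s g * x"
proof -
  have sg: "s a * (s g * s g) = s g"
    using arg_cong[OF grp_gga, of s] by (simp add: s_mult mult.assoc)
  have "b * (a * s g) = b * (a * (s a * (s g * s g)))"
    by (simp only: sg)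
  also have "\<dots> = b * (a * s a) * (s g * s g)"
    by (simp add: mult.assoc)
  also have "\<dots> = s g"
    by (simp add: mp_ba_sa sg)
  finally show "b * (a * s g) = s g" .
  then show "b * (a * (s g * x)) = s g * x"
    by (simp flip: mult.assoc)
qed

lemma mp_sg_ab: "s g * (a * b) = s g"
proof -
  interpret star: mp_group_inverses s "s a" "s b" "s g"
    by (rule dual_inverses)
  show ?thesis
    using arg_cong[OF star.mp_ba_sg(1), of s] by (simp add: s_mult mult.assoc)
qed

lemma s_grp_b: "s (a * g) * b = b"
proof -
  have "s (a * g) * (b * a) = s (b * (a * (a * g)))"
    by (simp add: s_mult s_mp_ba mult.assoc)
  also have "\<dots> = b * a"
    by (simp add: absorb mp_ba_sym)
  finally have "s (a * g) * (b * a) * b = b * a * b"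
    by simp
  then show ?thesis
    by (simp add: absorb mult.assoc)
qed

lemma mp_eq_group_if_gab:
  assumes "g * a * b = b" shows "b = g"
proof -
  have ba_ag: "b * a = a * g"
    using arg_cong[OF assms, of "\<lambda>z. z * a"] by (simp add: absorb grp_comm mult.assoc)
  have E_sym: "s (a * g) = a * g"
    using mp_ba_sym by (simp add: ba_ag)
  have "a * b = s (a * b)"
    by (simp add: mp_ab_sym)
  also have "\<dots> = s (a * g * (a * b))"
    by (simp add: absorb mult.assoc)
  also have "\<dots> = s (a * b) * s (a * g)"
    by (rule s_mult)
  also have "\<dots> = a * b * (a * g)"
    by (simp add: mp_ab_sym E_sym)
  also have "\<dots> = a * g"
    by (simp add: absorb mult.assoc)
  finally have ab_ag: "a * b = a * g" .
  have "b = b * a * b"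
    by (simp add: mp_bab)
  also have "\<dots> = g * (a * g)"
    by (simp add: ba_ag ab_ag grp_comm mult.assoc)
  also have "\<dots> = g"
    by (simp add: grp_gag flip: mult.assoc)
  finally show ?thesis .
qed

lemma mp_eq_group_if_bag:
  assumes "b * a * g = b" shows "b = g"
proof -
  interpret star: mp_group_inverses s "s a" "s b" "s g"
    by (rule dual_inverses)
  have "s g * s a * s b = s b"
    using arg_cong[OF assms, of s] by (simp add: s_mult mult.assoc)
  then have "s b = s g"
    by (rule star.mp_eq_group_if_gab)
  from arg_cong[OF this, of s] show ?thesis
    by simp
qed

lemma mp_eq_group_if_ab_absorbs_ba:
  assumes "a * b * (b * a) = b * a" shows "b = g"
proof -
  have abb: "a * (b * b) = b"
    using arg_cong[OF assms, of "\<lambda>z. z * b"] by (simp add: absorb mult.assoc)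
  have "g * a * b = g * a * (a * (b * b))"
    by (simp add: abb)
  also have "\<dots> = a * (b * b)"
    by (simp add: absorb mult.assoc)
  also have "\<dots> = b"
    by (rule abb)
  finally have "g * a * b = b" .
  then show ?thesis
    by (rule mp_eq_group_if_gab)
qed

lemma partial_isometry_if_EP:
  assumes "b = g" and "a * s g * b = a" shows "s a = b"
proof -
  have sandwich: "a * s g * g = a"
    using assms by simp
  have "s g = s g * (a * g)"
    using mp_sg_ab assms(1) by simp
  also have "\<dots> = b * (a * (s g * (g * a)))"
    by (simp add: mp_ba_sg grp_comm)
  also have "\<dots> = g * (a * s g * g) * a"
    using assms(1) by (simp add: mult.assoc)
  also have "\<dots> = a"
    by (simp add: sandwich grp_gaa)
  finally have "s g = a" .
  from arg_cong[OF this, of s] show ?thesis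
    using assms(1) by simp
qed

lemma sandwich_eq_and_tail_eq_if_SEP:
  assumes "s a = b" and "b = g" shows "a * s g * b = a" and "b * a\<^sup>2 = a"
proof -
  have "s g = a"
    using assms s_s by metis
  then show "a * s g * b = a" "b * a\<^sup>2 = a"
    using assms(2) by (simp_all add: absorb power2_eq_square mult.assoc)
qed

lemma SEP_if_sandwich_right_idem:
  assumes "a * s g * b * (a * s g * b) = a * s g * b * (b * a\<^sup>2)"
  shows "s a = b \<and> b = g"
proof -
  have "s g * s g * b = b * (a * s g * b * (a * s g * b))"
    by (simp add: mp_ba_sg mult.assoc)
  also have "\<dots> = b * (a * s g * b * (b * a\<^sup>2))"
    by (simp add: assms)
  also have "\<dots> = s g * b * b * a * a"
    by (simp add: mp_ba_sg power2_eq_square mult.assoc)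
  \<comment> \<open>left multiplication by \<open>(a\<^sup>*)\<^sup>2\<close> turns \<open>((a\<^sup>#)\<^sup>*)\<^sup>2\<close> into \<open>(aa\<^sup>#)\<^sup>*\<close>, which fixes \<open>a\<^sup>\<dagger>\<close>\<close>
  finally have "s a * s a * (s g * s g * b) = s a * s a * (s g * b * b * a * a)"
    by simp
  moreover have "s a * s a * (s g * s g * b) = s (g * (g * (a * a))) * b"
    by (simp add: s_mult mult.assoc)
  moreover have "s a * s a * (s g * b * b * a * a) = s (g * (a * a)) * b * b * a * a"
    by (simp add: s_mult mult.assoc)
  ultimately have key: "s a * b * b * a * a = b"
    using s_grp_b by (simp add: absorb grp_comm)
  have "b * a * g = s a * b * b * a * a * a * g"
    by (simp add: key)
  also have "\<dots> = s a * b * b * a * a"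
    by (simp add: absorb mult.assoc)
  also have "\<dots> = b"
    by (rule key)
  finally have "b = g"
    by (rule mp_eq_group_if_bag)
  have "s a = s a * (a * b)"
    by (simp add: mp_sa_ab)
  also have "\<dots> = s a * b * b * a * a"
    using \<open>b = g\<close> by (simp add: absorb grp_comm mult.assoc)
  finally show ?thesis
    using key \<open>b = g\<close> by simp
qed

lemma SEP_if_left_sandwich_idem:
  assumes "b * a\<^sup>2 * (b * a\<^sup>2) = a * s g * b * (b * a\<^sup>2)"
  shows "s a = b \<and> b = g"
proof -
  have "b * a * a = b * a\<^sup>2 * (b * a\<^sup>2) * g"
    by (simp add: absorb power2_eq_square mult.assoc)
  also have "\<dots> = a * s g * b * (b * a\<^sup>2) * g"
    by (simp add: assms)
  also have "\<dots> = a * s g * b * (b * a)"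
    by (simp add: absorb power2_eq_square mult.assoc)
  finally have y_eq: "b * a * a = a * s g * b * (b * a)" .
  have "a * b * (b * a * a) = b * a * a"
    by (subst (1 2) y_eq) (simp add: absorb mult.assoc)
  from arg_cong[OF this, of "\<lambda>z. z * g"] have "a * b * (b * a) = b * a"
    by (simp add: absorb mult.assoc)
  then have "b = g"
    by (rule mp_eq_group_if_ab_absorbs_ba)
  have "a * s g * b = a * s g * b * (b * a)"
    using \<open>b = g\<close> by (simp add: absorb mult.assoc)
  also have "\<dots> = b * a * a"
    by (simp add: y_eq)
  also have "\<dots> = a"
    using \<open>b = g\<close> grp_gaa by simp
  finally show ?thesis
    using \<open>b = g\<close> partial_isometry_if_EP by blast
qed

lemma SEP_if_right_sandwich_idem:
  assumes "b * a\<^sup>2 * (b * a\<^sup>2) = b * a\<^sup>2 * (a * s g * b)"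
  shows "s a = b \<and> b = g"
proof -
  have "a * s g * b = g * (g * (a * (b * a\<^sup>2 * (a * s g * b))))"
    by (simp add: absorb power2_eq_square mult.assoc)
  also have "\<dots> = g * (g * (a * (b * a\<^sup>2 * (b * a\<^sup>2))))"
    by (simp add: assms)
  also have "\<dots> = a"
    by (simp add: absorb power2_eq_square mult.assoc)
  finally have sandwich: "a * s g * b = a" .
  have "b * a * (a * b) = b * (a * s g * b) * (a * b)"
    by (simp add: sandwich)
  also have "\<dots> = b * (a * s g * b)"
    by (simp add: absorb mp_ba_sg mult.assoc)
  also have "\<dots> = b * a"
    by (simp add: sandwich)
  finally have "s (b * a * (a * b)) = s (b * a)"
    by simp
  then have "a * b * (b * a) = b * a"
    by (simp add: s_mult s_mp_ab s_mp_ba mult.assoc)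
  then have "b = g"
    by (rule mp_eq_group_if_ab_absorbs_ba)
  then show ?thesis
    using sandwich partial_isometry_if_EP by blast
qed

lemma SEP_iff_sandwich_idempotents:
  "(s a = b \<and> b = g \<longleftrightarrow> a * s g * b * (a * s g * b) = a * s g * b * (b * a\<^sup>2))
 \<and> (s a = b \<and> b = g \<longleftrightarrow> b * a\<^sup>2 * (b * a\<^sup>2) = a * s g * b * (b * a\<^sup>2))
 \<and> (s a = b \<and> b = g \<longleftrightarrow> b * a\<^sup>2 * (b * a\<^sup>2) = b * a\<^sup>2 * (a * s g * b))"
proof -
  have "a * s g * b * (a * s g * b) = a * s g * b * (b * a\<^sup>2)
      \<and> b * a\<^sup>2 * (b * a\<^sup>2) = a * s g * b * (b * a\<^sup>2)
      \<and> b * a\<^sup>2 * (b * a\<^sup>2) = b * a\<^sup>2 * (a * s g * b)"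
    if "s a = b \<and> b = g"
    using that sandwich_eq_and_tail_eq_if_SEP by simp
  then show ?thesis
    using SEP_if_sandwich_right_idem SEP_if_left_sandwich_idem SEP_if_right_sandwich_idem
    by blast
qed

end

lemma is_mp_inverse_unique:
  assumes "involution st" and "is_mp_inverse st a b" and "is_mp_inverse st a c"
  shows "b = c"
proof -
  have st_mult: "st (x * y) = st y * st x" for x y
    using assms(1) unfolding involution_def by blast
  have b: "a * b * a = a" "b * a * b = b" "st (a * b) = a * b" "st (b * a) = b * a"
    and c: "a * c * a = a" "c * a * c = c" "st (a * c) = a * c" "st (c * a) = c * a"
    using assms(2,3) unfolding is_mp_inverse_def by auto
  have "a * b = a * c"
    using b c st_mult by (metis mult.assoc)
  moreover have "b * a = c * a"
    using b c st_mult by (metis mult.assoc)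
  ultimately show ?thesis
    using b(2) c(2) by (metis mult.assoc)
qed

lemma is_group_inverse_unique:
  assumes "is_group_inverse a b" and "is_group_inverse a c"
  shows "b = c"
proof -
  have b: "a * b * a = a" "b * a * b = b" "a * b = b * a"
    and c: "a * c * a = a" "c * a * c = c" "a * c = c * a"
    using assms unfolding is_group_inverse_def by auto
  have "a * b = a * c"
    using b c by (metis mult.assoc)
  then show ?thesis
    using b c by (metis mult.assoc)
qed

lemma mp_inv_is_mp_inverse:
  assumes "involution st" and "mp_invertible st a"
  shows "is_mp_inverse st a (mp_inv st a)"
  using assms is_mp_inverse_unique unfolding mp_invertible_def mp_inv_def
  by (metis theI)

lemma group_inv_is_group_inverse:
  assumes "group_invertible a"
  shows "is_group_inverse a (group_inv a)"
  using assms is_group_inverse_unique unfolding group_invertible_def group_inv_def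
  by (metis theI)

lemma mp_group_inverses_mp_inv_group_inv:
  assumes "involution st" and "group_invertible a" and "mp_invertible st a"
  shows "mp_group_inverses st a (mp_inv st a) (group_inv a)"
  using assms mp_inv_is_mp_inverse[OF assms(1,3)] group_inv_is_group_inverse[OF assms(2)]
  unfolding mp_group_inverses_def involution_def is_mp_inverse_def is_group_inverse_def
  by blast

theorem theorem3p3:
  fixes st :: "'a::ring_1 \<Rightarrow> 'a" and a :: 'a
  assumes "involution st"
    and "group_invertible a" and "mp_invertible st a"
  shows "(SEP st a \<longleftrightarrow>
            right_c_idempotent (mp_inv st a * a ^ 2) (a * st (group_inv a) * mp_inv st a))
       \<and> (SEP st a \<longleftrightarrow>
            left_c_idempotent (a * st (group_inv a) * mp_inv st a) (mp_inv st a * a ^ 2))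
       \<and> (SEP st a \<longleftrightarrow>
            right_c_idempotent (a * st (group_inv a) * mp_inv st a) (mp_inv st a * a ^ 2))"
proof -
  interpret mp_group_inverses st a "mp_inv st a" "group_inv a"
    using assms by (rule mp_group_inverses_mp_inv_group_inv)
  have SEP: "SEP st a \<longleftrightarrow> st a = mp_inv st a \<and> mp_inv st a = group_inv a"
    using assms(2,3) unfolding SEP_def by blast
  show ?thesis
    unfolding SEP right_c_idempotent_def left_c_idempotent_def
    by (rule SEP_iff_sandwich_idempotents)
qed

end
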